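(* Consider an undiscounted ($\gamma=1$) MDP with finite state set $\mathcal{S}$, deterministic transitions $\delta:\{(s,a): s\in\mathcal{S}\setminus\mathcal{T}, a\in\mathbb{A}(s)\}\to\mathcal{S}$, a nonempty set $\mathcal{T}\subseteq\mathcal{S}$ of absorbing terminal states, and rewards $R(s,a)$. Assume every non-terminal state $s$ has a finite action set with $|\mathbb{A}(s)|\ge 2$, that from every state some terminal state is reachable, and that $\max_{s,a} R(s,a) < -\tau$ for a given $\tau>0$. For non-terminal $s$ let $\tau_s = \tau/\log|\mathbb{A}(s)|$ (the decoupled entropy temperature). Then the decoupled entropy-regularized Bellman equation $$V(s) = \tau_s \log \sum_{a\in\mathbb{A}(s)} \exp\!\Big(\frac{R(s,a) + V(\delta(s,a))}{\tau_s}\Big)\quad (s\notin\mathcal{T}),\qquad V(s)=0\quad (s\in\mathcal{T}),$$ has a real-valued (finite) solution $V:\mathcal{S}\to\mathbb{R}$.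
   Context: This is the maximum-entropy (soft) Bellman equation in which the entropy regularizer at each state is divided by its range $\log|\mathbb{A}(s)|$, i.e. the temperature at state $s$ is $\tau/\log|\mathbb{A}(s)|$; $\mathbb{A}(s)$ denotes the set of actions available at state $s$. *)

theory Defs
  imports Complex_Main
begin

definition mdp_edges :: "'s set \<Rightarrow> 's set \<Rightarrow> ('s \<Rightarrow> 'a set) \<Rightarrow> ('s \<Rightarrow> 'a \<Rightarrow> 's) \<Rightarrow> ('s \<times> 's) set" where
  "mdp_edges S T A \<delta> = {(s, \<delta> s a) | s a. s \<in> S - T \<and> a \<in> A s}"

definition decoupled_temp :: "real \<Rightarrow> ('s \<Rightarrow> 'a set) \<Rightarrow> 's \<Rightarrow> real" where
  "decoupled_temp \<tau> A s = \<tau> / ln (real (card (A s)))"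

end

theory Submission
  imports Defs "HOL-Library.Function_Algebras"
begin

text \<open>The decoupled Bellman operator B is monotone, maps the zero function below itself because
  R < -\<tau> and the temperature scales the entropy bonus to exactly \<tau>, and dominates
  L s = -M * (number of steps from s to a terminal state), where -M bounds the rewards from below.
  Hence B maps the order interval [L, 0] of real functions into itself, and the Knaster--Tarski
  construction (pointwise supremum of all post-fixed points in the interval) yields a fixed point.\<close>

lemma monotone_map_has_fixpoint_between:
  fixes B :: "('s \<Rightarrow> real) \<Rightarrow> 's \<Rightarrow> real"
  assumes mono: "\<And>V W. V \<le> W \<Longrightarrow> B V \<le> B W"
    and LU: "L \<le> U" and L_le: "L \<le> B L" and U_ge: "B U \<le> U"
  shows "\<exists>W. L \<le> W \<and> W \<le> U \<and> B W = W"
proof -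
  define P where "P = {V. L \<le> V \<and> V \<le> U \<and> V \<le> B V}"
  define W where "W = (\<lambda>s. SUP V\<in>P. V s)"
  have LP: "L \<in> P"
    unfolding P_def using LU L_le by simp
  have bdd: "bdd_above ((\<lambda>V. V s) ` P)" for s
    by (rule bdd_aboveI[of _ "U s"]) (auto simp: P_def le_fun_def)
  have upper: "V \<le> W" if "V \<in> P" for V
    unfolding W_def le_fun_def by (blast intro: cSUP_upper[OF that bdd])
  have LW: "L \<le> W"
    using upper[OF LP] .
  have WU: "W \<le> U"
    unfolding W_def le_fun_def using LP by (auto intro!: cSUP_least simp: P_def le_fun_def)
  have W_le: "W \<le> B W"
  proof (unfold le_fun_def, rule allI)
    fix s
    have "(SUP V\<in>P. V s) \<le> B W s"
    proof (rule cSUP_least)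
      fix V assume V: "V \<in> P"
      then have "V s \<le> B V s"
        by (simp add: P_def le_fun_def)
      also have "\<dots> \<le> B W s"
        using mono[OF upper[OF V]] by (simp add: le_fun_def)
      finally show "V s \<le> B W s" .
    qed (use LP in auto)
    then show "W s \<le> B W s"
      by (simp add: W_def)
  qed
  have "L \<le> B W"
    using L_le mono[OF LW] by (rule order_trans)
  moreover have "B W \<le> U"
    using mono[OF WU] U_ge by (rule order_trans)
  ultimately have "B W \<in> P"
    unfolding P_def using mono[OF W_le] by simp
  then have "B W \<le> W"
    by (rule upper)
  with LW WU W_le show ?thesis
    by (blast intro: order_antisym)
qed

lemma log_sum_exp_mono:
  fixes f g :: "'a \<Rightarrow> real"
  assumes "c > 0" "finite I" "I \<noteq> {}" "\<And>i. i \<in> I \<Longrightarrow> f i \<le> g i"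
  shows "c * ln (\<Sum>i\<in>I. exp (f i / c)) \<le> c * ln (\<Sum>i\<in>I. exp (g i / c))"
proof -
  have "(\<Sum>i\<in>I. exp (f i / c)) \<le> (\<Sum>i\<in>I. exp (g i / c))"
    using assms by (intro sum_mono) (simp add: divide_right_mono)
  moreover have "(\<Sum>i\<in>I. exp (f i / c)) > 0"
    using assms by (intro sum_pos) auto
  ultimately show ?thesis
    using \<open>c > 0\<close> by (simp add: mult_left_mono)
qed

lemma log_sum_exp_ge_member:
  fixes f :: "'a \<Rightarrow> real"
  assumes "c > 0" "finite I" "i \<in> I"
  shows "f i \<le> c * ln (\<Sum>j\<in>I. exp (f j / c))"
proof -
  have "exp (f i / c) \<le> (\<Sum>j\<in>I. exp (f j / c))"
    using assms by (intro member_le_sum) auto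
  then have "f i / c \<le> ln (\<Sum>j\<in>I. exp (f j / c))"
    by (metis exp_gt_zero ln_exp ln_le_cancel_iff order_less_le_trans)
  then show ?thesis
    using \<open>c > 0\<close> by (simp add: pos_divide_le_eq mult.commute)
qed

lemma log_sum_exp_le_bound:
  fixes f :: "'a \<Rightarrow> real"
  assumes "c > 0" "finite I" "I \<noteq> {}" "\<And>i. i \<in> I \<Longrightarrow> f i \<le> m"
  shows "c * ln (\<Sum>i\<in>I. exp (f i / c)) \<le> m + c * ln (real (card I))"
proof -
  have card_pos: "real (card I) > 0"
    using assms by (simp add: card_gt_0_iff)
  have "c * ln (\<Sum>i\<in>I. exp (f i / c)) \<le> c * ln (\<Sum>i\<in>I. exp (m / c))"
    using assms by (intro log_sum_exp_mono) auto
  also have "\<dots> = c * (ln (real (card I)) + m / c)"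
    using card_pos by (simp add: ln_mult)
  also have "\<dots> = m + c * ln (real (card I))"
    using \<open>c > 0\<close> by (simp add: algebra_simps)
  finally show ?thesis .
qed

definition soft_bellman ::
    "'s set \<Rightarrow> ('s \<Rightarrow> 'a set) \<Rightarrow> ('s \<Rightarrow> 'a \<Rightarrow> 's) \<Rightarrow> ('s \<Rightarrow> 'a \<Rightarrow> real) \<Rightarrow> ('s \<Rightarrow> real)
      \<Rightarrow> ('s \<Rightarrow> real) \<Rightarrow> 's \<Rightarrow> real" where
  "soft_bellman N A \<delta> R temp V s =
     (if s \<in> N then temp s * ln (\<Sum>a\<in>A s. exp ((R s a + V (\<delta> s a)) / temp s)) else 0)"

locale soft_bellman_setting =
  fixes N :: "'s set" and A :: "'s \<Rightarrow> 'a set" and temp :: "'s \<Rightarrow> real"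
  assumes finite_actions: "s \<in> N \<Longrightarrow> finite (A s)"
    and actions_nonempty: "s \<in> N \<Longrightarrow> A s \<noteq> {}"
    and temp_pos: "s \<in> N \<Longrightarrow> temp s > 0"
begin

lemma soft_bellman_mono:
  assumes "V \<le> W"
  shows "soft_bellman N A \<delta> R temp V \<le> soft_bellman N A \<delta> R temp W"
  unfolding le_fun_def soft_bellman_def
  using assms finite_actions actions_nonempty temp_pos
    log_sum_exp_mono[where f = "\<lambda>a. R _ a + V (\<delta> _ a)" and g = "\<lambda>a. R _ a + W (\<delta> _ a)"]
  by (simp add: le_fun_def)

lemma soft_bellman_ge_action:
  assumes "s \<in> N" "a \<in> A s"
  shows "R s a + V (\<delta> s a) \<le> soft_bellman N A \<delta> R temp V s"
  using assms finite_actions temp_pos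
    log_sum_exp_ge_member[where f = "\<lambda>a. R s a + V (\<delta> s a)" and c = "temp s"]
  by (simp add: soft_bellman_def)

lemma soft_bellman_nonpos:
  assumes "V \<le> 0"
    and rew: "\<And>s a. s \<in> N \<Longrightarrow> a \<in> A s \<Longrightarrow> R s a \<le> - temp s * ln (real (card (A s)))"
  shows "soft_bellman N A \<delta> R temp V \<le> 0"
proof (unfold le_fun_def, rule allI)
  fix s
  show "soft_bellman N A \<delta> R temp V s \<le> 0 s"
  proof (cases "s \<in> N")
    case True
    have "R s a + V (\<delta> s a) \<le> - temp s * ln (real (card (A s)))" if "a \<in> A s" for a
      using rew[OF True that] le_funD[OF \<open>V \<le> 0\<close>, of "\<delta> s a"] by simp
    then have "temp s * ln (\<Sum>a\<in>A s. exp ((R s a + V (\<delta> s a)) / temp s))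
        \<le> - temp s * ln (real (card (A s))) + temp s * ln (real (card (A s)))"
      using True finite_actions actions_nonempty temp_pos by (intro log_sum_exp_le_bound) auto
    then show ?thesis
      using True by (simp add: soft_bellman_def)
  qed (simp add: soft_bellman_def)
qed

lemma soft_bellman_ge_descent_bound:
  fixes d :: "'s \<Rightarrow> nat"
  assumes "M \<ge> 0"
    and rew: "\<And>s a. s \<in> N \<Longrightarrow> a \<in> A s \<Longrightarrow> - M \<le> R s a"
    and descent: "\<And>s. s \<in> N \<Longrightarrow> \<exists>a\<in>A s. Suc (d (\<delta> s a)) \<le> d s"
  shows "(\<lambda>s. - M * real (d s)) \<le> soft_bellman N A \<delta> R temp (\<lambda>s. - M * real (d s))"
proof (unfold le_fun_def, rule allI)
  define L where "L = (\<lambda>s. - M * real (d s))"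
  fix s
  show "L s \<le> soft_bellman N A \<delta> R temp L s"
  proof (cases "s \<in> N")
    case True
    then obtain a where a: "a \<in> A s" "Suc (d (\<delta> s a)) \<le> d s"
      using descent by blast
    have "L s \<le> - M + L (\<delta> s a)"
      using mult_left_mono[of "real (Suc (d (\<delta> s a)))" "real (d s)" M] a(2) \<open>M \<ge> 0\<close>
      by (simp add: L_def algebra_simps)
    also have "\<dots> \<le> R s a + L (\<delta> s a)"
      using rew[OF True a(1)] by simp
    also have "\<dots> \<le> soft_bellman N A \<delta> R temp L s"
      using True a(1) by (rule soft_bellman_ge_action)
    finally show ?thesis .
  qed (simp add: soft_bellman_def L_def \<open>M \<ge> 0\<close>)
qed

end

definition steps_to :: "('s \<times> 's) set \<Rightarrow> 's set \<Rightarrow> 's \<Rightarrow> nat" where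
  "steps_to E T s = (LEAST n. \<exists>t\<in>T. (s, t) \<in> E ^^ n)"

lemma steps_to_descent:
  assumes "(s, t) \<in> E\<^sup>*" "t \<in> T" "s \<notin> T"
  shows "\<exists>u. (s, u) \<in> E \<and> Suc (steps_to E T u) \<le> steps_to E T s"
proof -
  have "\<exists>n. \<exists>t\<in>T. (s, t) \<in> E ^^ n"
    using assms by (auto simp: rtrancl_power)
  from LeastI_ex[OF this] obtain t' where t': "t' \<in> T" "(s, t') \<in> E ^^ steps_to E T s"
    unfolding steps_to_def by blast
  then obtain m where m: "steps_to E T s = Suc m"
    using \<open>s \<notin> T\<close> by (cases "steps_to E T s") auto
  then obtain u where u: "(s, u) \<in> E" "(u, t') \<in> E ^^ m"
    using t'(2) by (metis relpow_Suc_D2)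
  have "steps_to E T u \<le> m"
    unfolding steps_to_def using u(2) t'(1) by (blast intro: Least_le)
  with u(1) m show ?thesis
    by auto
qed

lemma finite_reward_lower_bound:
  fixes R :: "'s \<Rightarrow> 'a \<Rightarrow> real"
  assumes "finite N" "\<And>s. s \<in> N \<Longrightarrow> finite (A s)"
  obtains M where "M \<ge> 0" "\<And>s a. s \<in> N \<Longrightarrow> a \<in> A s \<Longrightarrow> - M \<le> R s a"
proof
  let ?M = "\<Sum>s\<in>N. \<Sum>a\<in>A s. \<bar>R s a\<bar>"
  show "?M \<ge> 0"
    by (intro sum_nonneg) auto
  fix s a assume "s \<in> N" "a \<in> A s"
  have "\<bar>R s a\<bar> \<le> (\<Sum>a\<in>A s. \<bar>R s a\<bar>)"
    using assms \<open>s \<in> N\<close> \<open>a \<in> A s\<close> by (intro member_le_sum) auto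
  also have "\<dots> \<le> ?M"
    using assms \<open>s \<in> N\<close> by (intro member_le_sum sum_nonneg) auto
  finally show "- ?M \<le> R s a"
    by linarith
qed

theorem proposition1:
  fixes S T :: "'s set" and A :: "'s \<Rightarrow> 'a set" and \<delta> :: "'s \<Rightarrow> 'a \<Rightarrow> 's"
    and R :: "'s \<Rightarrow> 'a \<Rightarrow> real" and \<tau> :: real
  assumes finS: "finite S"
    and TS: "T \<subseteq> S" and Tne: "T \<noteq> {}"
    and finA: "\<And>s. s \<in> S - T \<Longrightarrow> finite (A s)"
    and cardA: "\<And>s. s \<in> S - T \<Longrightarrow> card (A s) \<ge> 2"
    and trans: "\<And>s a. s \<in> S - T \<Longrightarrow> a \<in> A s \<Longrightarrow> \<delta> s a \<in> S"
    and reach: "\<And>s. s \<in> S \<Longrightarrow> \<exists>t\<in>T. (s, t) \<in> (mdp_edges S T A \<delta>)\<^sup>*"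
    and tau_pos: "\<tau> > 0"
    and rew: "\<And>s a. s \<in> S - T \<Longrightarrow> a \<in> A s \<Longrightarrow> R s a < - \<tau>"
  shows "\<exists>V :: 's \<Rightarrow> real.
           (\<forall>s\<in>S - T. V s = decoupled_temp \<tau> A s *
               ln (\<Sum>a\<in>A s. exp ((R s a + V (\<delta> s a)) / decoupled_temp \<tau> A s)))
         \<and> (\<forall>s\<in>T. V s = 0)"
proof -
  let ?temp = "decoupled_temp \<tau> A" and ?d = "steps_to (mdp_edges S T A \<delta>) T"
  let ?B = "soft_bellman (S - T) A \<delta> R ?temp"
  have ln_card_pos: "ln (real (card (A s))) > 0" if "s \<in> S - T" for s
    using cardA[OF that] by simp
  interpret soft_bellman_setting "S - T" A ?temp
  proof
    fix s assume "s \<in> S - T"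
    then show "finite (A s)" "A s \<noteq> {}" "decoupled_temp \<tau> A s > 0"
      using finA cardA[of s] tau_pos ln_card_pos[of s] by (auto simp: decoupled_temp_def)
  qed
  obtain M where M: "M \<ge> 0" "\<And>s a. s \<in> S - T \<Longrightarrow> a \<in> A s \<Longrightarrow> - M \<le> R s a"
    using finite_reward_lower_bound[of "S - T" A R] finS finA by blast
  have descent: "\<exists>a\<in>A s. Suc (?d (\<delta> s a)) \<le> ?d s" if "s \<in> S - T" for s
    using steps_to_descent[of s _ "mdp_edges S T A \<delta>" T] reach that
    by (fastforce simp: mdp_edges_def)
  have "(\<lambda>s. - M * real (?d s)) \<le> ?B (\<lambda>s. - M * real (?d s))"
    using M descent by (rule soft_bellman_ge_descent_bound)
  moreover have "?B 0 \<le> 0"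
    using rew ln_card_pos by (intro soft_bellman_nonpos) (fastforce simp: decoupled_temp_def)+
  moreover have "(\<lambda>s. - M * real (?d s)) \<le> 0"
    using M(1) by (simp add: le_fun_def)
  ultimately obtain V where "?B V = V"
    using monotone_map_has_fixpoint_between[of ?B] soft_bellman_mono by blast
  then show ?thesis
    using TS by (intro exI[of _ V]) (metis Diff_iff soft_bellman_def)
qed

end
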